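(* Let $\gamma$ be an oval parameterized by arc length, $s\mapsto\gamma(s)$, with curvature function $k(s)>0$. Consider pairs of parameters $(x,x')$ such that the tangent lines to $\gamma$ at $\gamma(x)$ and $\gamma(x')$ meet at a point $A$ of the exterior of $\gamma$ with $\gamma(x)=x_-(A)$ and $\gamma(x')=x_+(A)$. Let $\varphi\in(0,\pi)$ be the angle at $A$ between the tangent segments $A\gamma(x)$ and $A\gamma(x')$. Define $$H(x,x')=|\gamma(x)A|+|A\gamma(x')|.$$ Then $$\frac{\partial H}{\partial x}=-k(x)\,|A\gamma(x)|\cot\frac{\varphi}{2}-1,\qquad \frac{\partial H}{\partial x'}=k(x')\,|A\gamma(x')|\cot\frac{\varphi}{2}+1,$$ and $$\frac{\partial^2 H}{\partial x\,\partial x'}=-\frac{k(x)k(x')\big(|A\gamma(x)|+|A\gamma(x')|\big)}{2\sin^2\frac{\varphi}{2}}.$$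
   Context: An oval is a smooth closed simple planar curve $\gamma$ with everywhere positive curvature; it bounds a compact strictly convex domain $K$. Orient $\gamma$ counterclockwise, and let the arc length parameter increase along this orientation. For a point $A\in\mathbb{R}^2\setminus K$ there are exactly two lines through $A$ tangent to $\gamma$. The positive tangency point $x_+(A)$ is the one for which $x_+(A)-A$ is a positive multiple of the oriented tangent vector of $\gamma$ at $x_+(A)$. The negative tangency point $x_-(A)$ is the one for which $A-x_-(A)$ is a positive multiple of the oriented tangent vector of $\gamma$ at $x_-(A)$. *)

theory Defs
  imports "HOL-Analysis.Analysis"
begin

definition vderiv :: "(real \<Rightarrow> real^2) \<Rightarrow> real \<Rightarrow> real^2" where
  "vderiv f t = vector_derivative f (at t)"

definition smooth_curve :: "(real \<Rightarrow> real^2) \<Rightarrow> bool" where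
  "smooth_curve \<gamma> \<longleftrightarrow> (\<forall>n t. (vderiv ^^ n) \<gamma> differentiable (at t))"

text \<open>Oriented unit tangent (for an arc length parametrization) and signed curvature
  det(gamma', gamma''), positive w.r.t. the left normal.\<close>
definition tangent :: "(real \<Rightarrow> real^2) \<Rightarrow> real \<Rightarrow> real^2" where
  "tangent \<gamma> s = vderiv \<gamma> s"

definition curvature :: "(real \<Rightarrow> real^2) \<Rightarrow> real \<Rightarrow> real" where
  "curvature \<gamma> s =
     (let u = vderiv \<gamma> s; v = vderiv (vderiv \<gamma>) s in u$1 * v$2 - u$2 * v$1)"

text \<open>An oval parametrized by arc length, of total length L: smooth, L-periodic,
  simple (injective on one period), unit speed, positive signed curvature
  (positive curvature w.r.t. the left normal = counterclockwise orientation).\<close>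
definition arclength_oval :: "(real \<Rightarrow> real^2) \<Rightarrow> real \<Rightarrow> bool" where
  "arclength_oval \<gamma> L \<longleftrightarrow>
     L > 0 \<and> smooth_curve \<gamma> \<and> (\<forall>s. \<gamma> (s + L) = \<gamma> s) \<and> inj_on \<gamma> {0..<L} \<and>
     (\<forall>s. norm (tangent \<gamma> s) = 1) \<and> (\<forall>s. curvature \<gamma> s > 0)"

definition oval_domain :: "(real \<Rightarrow> real^2) \<Rightarrow> (real^2) set" where
  "oval_domain \<gamma> = range \<gamma> \<union> inside (range \<gamma>)"

text \<open>gamma(s) is the negative tangency point x_-(A): A - gamma(s) is a positive
  multiple of the oriented tangent at gamma(s).\<close>
definition is_neg_tangency :: "(real \<Rightarrow> real^2) \<Rightarrow> real^2 \<Rightarrow> real \<Rightarrow> bool" where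
  "is_neg_tangency \<gamma> A s \<longleftrightarrow> (\<exists>c>0. A - \<gamma> s = c *\<^sub>R tangent \<gamma> s)"

text \<open>gamma(s) is the positive tangency point x_+(A): gamma(s) - A is a positive
  multiple of the oriented tangent at gamma(s).\<close>
definition is_pos_tangency :: "(real \<Rightarrow> real^2) \<Rightarrow> real^2 \<Rightarrow> real \<Rightarrow> bool" where
  "is_pos_tangency \<gamma> A s \<longleftrightarrow> (\<exists>c>0. \<gamma> s - A = c *\<^sub>R tangent \<gamma> s)"

definition tangent_meet :: "(real \<Rightarrow> real^2) \<Rightarrow> real \<Rightarrow> real \<Rightarrow> real^2" where
  "tangent_meet \<gamma> x x' =
     (THE A. (\<exists>a. A = \<gamma> x + a *\<^sub>R tangent \<gamma> x) \<and> (\<exists>b. A = \<gamma> x' + b *\<^sub>R tangent \<gamma> x'))"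

definition H :: "(real \<Rightarrow> real^2) \<Rightarrow> real \<Rightarrow> real \<Rightarrow> real" where
  "H \<gamma> x x' = dist (\<gamma> x) (tangent_meet \<gamma> x x') + dist (tangent_meet \<gamma> x x') (\<gamma> x')"

definition vangle :: "real^2 \<Rightarrow> real^2 \<Rightarrow> real" where
  "vangle u v = arccos ((u \<bullet> v) / (norm u * norm v))"

end

theory Submission
  imports Defs
begin

text \<open>Where the tangent lines at \<open>\<gamma> s\<close> and \<open>\<gamma> t\<close> are transversal they meet at
  \<open>\<gamma> s + a T s = \<gamma> t - b T t\<close>, with \<open>a\<close>, \<open>b\<close> Cramer quotients over \<open>D = det (T s, T t)\<close>.
  Near \<open>(x, x')\<close> we have \<open>a, b > 0\<close>, so \<open>H = a + b\<close>, and the formulas follow by differentiating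
  with the Frenet equation \<open>T' = k \<cdot> rot90 T\<close>, using \<open>cos \<phi> = - T x \<bullet> T x'\<close> and \<open>sin \<phi> = D\<close>.

  The one global ingredient is \<open>D > 0\<close> at \<open>(x, x')\<close>, i.e. that \<open>x\<^sub>-(A)\<close> and \<open>x\<^sub>+(A)\<close> appear in
  this order. It comes from convexity: a simple closed curve of positive curvature lies strictly
  to the left of each tangent. That follows from Hopf's Umlaufsatz (the tangent turns exactly
  once), proved by lifting the direction of the chord from \<open>\<gamma> s\<close> to \<open>\<gamma> t\<close> over the triangle
  \<open>s0 \<le> s \<le> t \<le> s0 + L\<close>.\<close>

section \<open>Plane vectors\<close>

definition det2 :: "real^2 \<Rightarrow> real^2 \<Rightarrow> real" where
  "det2 u v = u$1 * v$2 - u$2 * v$1"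

lemma norm_vec2: "norm (v::real^2) = sqrt ((v$1)^2 + (v$2)^2)"
  by (simp add: norm_eq_sqrt_inner inner_vec_def UNIV_2 power2_eq_square)

lemma inner_vec2: "(v::real^2) \<bullet> w = v$1 * w$1 + v$2 * w$2"
  by (simp add: inner_vec_def UNIV_2)

lemma vec2_eq_iff: "(v::real^2) = w \<longleftrightarrow> v$1 = w$1 \<and> v$2 = w$2"
  by (simp add: vec_eq_iff forall_2)

lemma det2_sq_plus_inner_sq: "(det2 u v)^2 + (u \<bullet> v)^2 = (norm u)^2 * (norm v)^2"
  unfolding power2_norm_eq_inner by (simp add: det2_def inner_vec2 power2_eq_square algebra_simps)

lemma det2_cramer:
  assumes "det2 p q \<noteq> 0"
  shows "w = (det2 w q / det2 p q) *\<^sub>R p + (det2 p w / det2 p q) *\<^sub>R q"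
proof -
  have "w $ i * det2 p q = det2 w q * p $ i + det2 p w * q $ i" if "i = 1 \<or> i = 2" for i
    using that by (auto simp: det2_def algebra_simps)
  then show ?thesis using assms by (simp add: vec2_eq_iff add_divide_distrib[symmetric] eq_divide_eq)
qed

lemma det2_cramer_unique:
  assumes "det2 p q \<noteq> 0" and "w = a *\<^sub>R p + b *\<^sub>R q"
  shows "a = det2 w q / det2 p q" and "b = det2 p w / det2 p q"
  using assms by (auto simp: det2_def field_simps)

lemma det2_scaleR_left [simp]: "det2 (c *\<^sub>R u) v = c * det2 u v"
  and det2_scaleR_right [simp]: "det2 u (c *\<^sub>R v) = c * det2 u v"
  and det2_zero_left [simp]: "det2 0 v = 0"
  and det2_zero_right [simp]: "det2 u 0 = 0"
  and det2_minus_left [simp]: "det2 (- u) v = - det2 u v"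
  and det2_minus_right [simp]: "det2 u (- v) = - det2 u v"
  and det2_add_right: "det2 u (v + v') = det2 u v + det2 u v'"
  and det2_self [simp]: "det2 u u = 0"
  by (simp_all add: det2_def algebra_simps)

lemma has_vector_derivative_vec_nth:
  assumes "(f has_vector_derivative (v::real^'n)) F"
  shows "((\<lambda>s. f s $ i) has_real_derivative v $ i) F"
  using bounded_linear.has_vector_derivative[OF bounded_linear_vec_nth assms]
  by (simp add: has_real_derivative_iff_has_vector_derivative)

definition rot90 :: "real^2 \<Rightarrow> real^2" where
  "rot90 v = vector [- v$2, v$1]"

lemma rot90_nth [simp]: "rot90 v $ 1 = - v$2" "rot90 v $ 2 = v$1"
  by (simp_all add: rot90_def)

lemma det2_rot90_left [simp]: "det2 (rot90 u) v = - (u \<bullet> v)"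
  and det2_rot90_right [simp]: "det2 u (rot90 v) = u \<bullet> v"
  and inner_rot90_left [simp]: "rot90 u \<bullet> v = det2 u v"
  and inner_rot90_right [simp]: "u \<bullet> rot90 v = - det2 u v"
  by (simp_all add: det2_def inner_vec2 algebra_simps)

lemma has_real_derivative_det2 [derivative_intros]:
  assumes "(f has_vector_derivative f') (at x within S)" "(g has_vector_derivative g') (at x within S)"
  shows "((\<lambda>t. det2 (f t) (g t)) has_real_derivative det2 f' (g x) + det2 (f x) g') (at x within S)"
  unfolding det2_def
  by (rule derivative_eq_intros has_vector_derivative_vec_nth assms refl | simp add: algebra_simps)+

lemma has_real_derivative_inner_vec2 [derivative_intros]:
  assumes "(f has_vector_derivative f') (at x within S)" "(g has_vector_derivative (g'::real^2)) (at x within S)"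
  shows "((\<lambda>t. f t \<bullet> g t) has_real_derivative f' \<bullet> g x + f x \<bullet> g') (at x within S)"
  unfolding inner_vec2
  by (rule derivative_eq_intros has_vector_derivative_vec_nth assms refl | simp add: algebra_simps)+

lemma orthogonal_unit_vec2:
  assumes "norm u = 1" and "u \<bullet> v = 0"
  shows "v = det2 u v *\<^sub>R rot90 u"
proof -
  have u: "(u$1)^2 + (u$2)^2 = 1" and o: "u$1 * v$1 = - (u$2 * v$2)"
    using assms by (simp_all add: norm_vec2 inner_vec2 eq_neg_iff_add_eq_0)
  have "v$1 = (u$1 * v$2 - u$2 * v$1) * - u$2"
  proof -
    have "(u$1 * v$2 - u$2 * v$1) * - u$2 = u$1 * (- (u$2 * v$2)) + (u$2)^2 * v$1"
      by (simp add: algebra_simps power2_eq_square)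
    also have "\<dots> = ((u$1)^2 + (u$2)^2) * v$1" using o by (simp add: algebra_simps power2_eq_square)
    finally show ?thesis using u by simp
  qed
  moreover have "v$2 = (u$1 * v$2 - u$2 * v$1) * u$1"
  proof -
    have "(u$1 * v$2 - u$2 * v$1) * u$1 = (u$1)^2 * v$2 - u$2 * (u$1 * v$1)"
      by (simp add: algebra_simps power2_eq_square)
    also have "\<dots> = ((u$1)^2 + (u$2)^2) * v$2" using o by (simp add: algebra_simps power2_eq_square)
    finally show ?thesis using u by simp
  qed
  ultimately show ?thesis by (simp add: vec2_eq_iff det2_def)
qed

definition complex_of_vec2 :: "real^2 \<Rightarrow> complex" where
  "complex_of_vec2 v = Complex (v$1) (v$2)"

lemma complex_of_vec2_alt: "complex_of_vec2 v = of_real (v$1) + \<i> * of_real (v$2)"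
  by (simp add: complex_of_vec2_def complex_eq_iff)

lemma continuous_complex_of_vec2 [continuous_intros]:
  "continuous F f \<Longrightarrow> continuous F (\<lambda>x. complex_of_vec2 (f x))"
  unfolding complex_of_vec2_alt by (intro continuous_intros)

lemma Re_complex_of_vec2 [simp]: "Re (complex_of_vec2 v) = v$1"
  and Im_complex_of_vec2 [simp]: "Im (complex_of_vec2 v) = v$2"
  by (simp_all add: complex_of_vec2_def)

lemma complex_of_vec2_scaleR: "complex_of_vec2 (c *\<^sub>R v) = of_real c * complex_of_vec2 v"
  and complex_of_vec2_diff: "complex_of_vec2 (u - v) = complex_of_vec2 u - complex_of_vec2 v"
  and norm_complex_of_vec2 [simp]: "cmod (complex_of_vec2 v) = norm v"
  and complex_of_vec2_eq_0_iff [simp]: "complex_of_vec2 v = 0 \<longleftrightarrow> v = 0"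
  by (simp_all add: complex_of_vec2_def complex_eq_iff norm_vec2 cmod_def vec2_eq_iff)

lemma sgn_complex_of_vec2_pos_scaleR:
  "c > 0 \<Longrightarrow> sgn (complex_of_vec2 (c *\<^sub>R v)) = sgn (complex_of_vec2 v)"
  by (simp add: complex_of_vec2_scaleR sgn_mult sgn_of_real)

lemma periodic_add_of_int_mult:
  fixes L :: real
  assumes per: "\<And>s. f (s + L) = f s"
  shows "f (s + of_int n * L) = f s"
proof -
  have nat: "f (s + real m * L) = f s" for s m
  proof (induction m arbitrary: s)
    case (Suc m)
    have "f (s + real (Suc m) * L) = f ((s + real m * L) + L)" by (simp add: algebra_simps)
    then show ?case using per Suc by simp
  qed simp
  show ?thesis
  proof (cases "n \<ge> 0")
    case True then show ?thesis using nat[of s "nat n"] by simp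
  next
    case False
    then show ?thesis using nat[of "s + of_int n * L" "nat (-n)"] by (simp add: algebra_simps)
  qed
qed

lemma periodic_vector_derivative:
  assumes per: "\<And>s. f (s + L) = f s" and "\<And>s. f differentiable (at s)"
  shows "vector_derivative f (at (s + L)) = vector_derivative f (at s)"
proof -
  have "(f has_vector_derivative vector_derivative f (at (s + L))) (at (s + L))"
    using assms(2) vector_derivative_works by blast
  then have "((f \<circ> (\<lambda>u. u + L)) has_vector_derivative (1::real) *\<^sub>R vector_derivative f (at (s + L))) (at s)"
    by (intro vector_diff_chain_at) (auto intro!: derivative_eq_intros)
  moreover have "f \<circ> (\<lambda>u. u + L) = f" using per by auto
  ultimately show ?thesis by (simp add: vector_derivative_at)
qed

section \<open>Continuous logarithms\<close>

lemma exp_eq_imp_diff_constant: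
  fixes g h :: "'a::topological_space \<Rightarrow> complex"
  assumes S: "connected S" and cg: "continuous_on S g" and ch: "continuous_on S h"
    and e: "\<And>x. x \<in> S \<Longrightarrow> exp (g x) = exp (h x)" and x: "x \<in> S" and y: "y \<in> S"
  shows "g x - h x = g y - h y"
proof -
  have "(\<lambda>z. g z - h z) constant_on S"
  proof (rule continuous_discrete_range_constant[OF S])
    show "continuous_on S (\<lambda>z. g z - h z)" using cg ch by (intro continuous_intros)
    fix z assume z: "z \<in> S"
    show "\<exists>e>0. \<forall>w. w \<in> S \<and> g w - h w \<noteq> g z - h z \<longrightarrow> e \<le> cmod (g w - h w - (g z - h z))"
    proof (intro exI[of _ "2*pi"] conjI allI impI)
      fix w assume w: "w \<in> S \<and> g w - h w \<noteq> g z - h z"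
      show "2*pi \<le> cmod (g w - h w - (g z - h z))"
      proof (rule ccontr)
        assume "\<not> 2*pi \<le> cmod (g w - h w - (g z - h z))"
        then have "\<bar>Im (g w - h w) - Im (g z - h z)\<bar> < 2*pi"
          using abs_Im_le_cmod[of "g w - h w - (g z - h z)"] by simp
        moreover have "exp (g w - h w) = exp (g z - h z)"
          using e z w by (simp add: exp_diff)
        ultimately show False using exp_complex_eqI w by blast
      qed
    qed simp
  qed
  then show ?thesis using x y unfolding constant_on_def by force
qed

text \<open>On the closed upper half circle the principal argument is a continuous logarithm.\<close>
lemma log_increment_upper_half:
  fixes F g :: "real \<Rightarrow> complex"
  assumes ab: "a \<le> b" and cg: "continuous_on {a..b} g" and cF: "continuous_on {a..b} F"
    and e: "\<And>t. t \<in> {a..b} \<Longrightarrow> F t = exp (g t)"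
    and up: "\<And>t. t \<in> {a..b} \<Longrightarrow> Im (F t) \<ge> 0"
    and n1: "\<And>t. t \<in> {a..b} \<Longrightarrow> norm (F t) = 1"
  shows "g b - g a = \<i> * of_real (Arg2pi (F b) - Arg2pi (F a))"
proof -
  define h where "h t = \<i> * of_real (Arg2pi (F t))" for t
  have "continuous_on {a..b} (\<lambda>t. Arg2pi (F t))"
    by (rule continuous_on_compose2[OF continuous_on_upperhalf_Arg2pi cF]) (use up n1 in force)
  then have ch: "continuous_on {a..b} h" unfolding h_def by (intro continuous_intros)
  have eh: "exp (g t) = exp (h t)" if "t \<in> {a..b}" for t
  proof -
    have "F t = exp (h t)"
      using Arg2pi[of "F t"] n1[OF that] unfolding is_Arg_def h_def by simp
    then show ?thesis using e[OF that] by simp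
  qed
  have "g b - h b = g a - h a"
    by (rule exp_eq_imp_diff_constant[OF _ cg ch eh]) (use ab in auto)
  then show ?thesis unfolding h_def by (simp add: algebra_simps)
qed

definition secant_quotient :: "(real \<Rightarrow> 'a::real_normed_vector) \<Rightarrow> (real \<Rightarrow> 'a) \<Rightarrow> real \<times> real \<Rightarrow> 'a" where
  "secant_quotient f f' z =
     (if fst z = snd z then f' (fst z) else (1 / (snd z - fst z)) *\<^sub>R (f (snd z) - f (fst z)))"

lemma secant_deviation_bound:
  fixes f :: "real \<Rightarrow> 'a::real_normed_vector"
  assumes f': "\<And>u. (f has_vector_derivative f' u) (at u)"
    and near: "\<And>u. \<bar>u - p\<bar> < d \<Longrightarrow> norm (f' u - f' p) \<le> e"
    and s: "\<bar>s - p\<bar> < d" and t: "\<bar>t - p\<bar> < d"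
  shows "norm (f t - f s - (t - s) *\<^sub>R f' p) \<le> e * \<bar>t - s\<bar>"
proof -
  have ball: "u \<in> ball p d \<longleftrightarrow> \<bar>u - p\<bar> < d" for u by (simp add: dist_real_def abs_minus_commute)
  have "norm (f t - f s - (t - s) *\<^sub>R f' p) \<le> norm (t - s) * e"
  proof (rule differentiable_bound_linearization[where f' = "\<lambda>u h. h *\<^sub>R f' u" and S = "ball p d"])
    fix u :: real assume "u \<in> {0..1}"
    then have "s + u *\<^sub>R (t - s) \<in> closed_segment s t"
      by (auto simp: closed_segment_def algebra_simps intro!: exI[of _ u])
    then show "s + u *\<^sub>R (t - s) \<in> ball p d"
      using closed_segment_subset[OF _ _ convex_ball] s t ball by blast
  next
    fix u assume u: "u \<in> ball p d"
    show "(f has_derivative (\<lambda>h. h *\<^sub>R f' u)) (at u within ball p d)"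
      using f' has_vector_derivative_at_within unfolding has_vector_derivative_def by blast
    have "onorm (\<lambda>h. h *\<^sub>R (f' u - f' p)) = norm (f' u - f' p)"
      using onorm_scaleR_left[of "\<lambda>x::real. x" "f' u - f' p"] onorm_id[where 'a=real] by simp
    also have "\<dots> \<le> e" using u ball by (intro near) auto
    finally show "onorm ((\<lambda>h. h *\<^sub>R f' u) - (\<lambda>h. h *\<^sub>R f' p)) \<le> e"
      by (simp add: fun_diff_def scaleR_diff_right)
  qed (use s ball in auto)
  then show ?thesis by (simp add: mult.commute)
qed

lemma continuous_secant_quotient:
  fixes f :: "real \<Rightarrow> 'a::real_normed_vector"
  assumes f': "\<And>u. (f has_vector_derivative f' u) (at u)" and cf': "\<And>u. isCont f' u"
  shows "continuous (at z) (secant_quotient f f')"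
proof (cases "fst z = snd z")
  case False
  define r where "r = dist (fst z) (snd z) / 2"
  have r: "r > 0" using False by (simp add: r_def)
  have cf: "isCont f u" for u using f' differentiable_imp_continuous_within differentiableI_vector by blast
  have "continuous (at z) (\<lambda>w. (1 / (snd w - fst w)) *\<^sub>R (f (snd w) - f (fst w)))"
    using False
    by (intro continuous_intros continuous_at_compose[OF _ cf, unfolded comp_def])
       (auto simp: prod_eq_iff)
  then show ?thesis
  proof (rule continuous_transform_within[OF _ r])
    fix w assume "dist w z < r"
    then have "dist (fst w) (fst z) < r" "dist (snd w) (snd z) < r"
      using dist_fst_le[of w z] dist_snd_le[of w z] by linarith+
    then have "fst w \<noteq> snd w" unfolding r_def dist_real_def by (auto simp: abs_if split: if_splits)
    then show "(1 / (snd w - fst w)) *\<^sub>R (f (snd w) - f (fst w)) = secant_quotient f f' w"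
      by (simp add: secant_quotient_def)
  qed auto
next
  case True
  define p where "p = fst z"
  have zp: "z = (p, p)" using True by (simp add: p_def prod_eq_iff)
  show ?thesis unfolding continuous_at_eps_delta
  proof (intro allI impI)
    fix e :: real assume e: "e > 0"
    obtain d where d: "d > 0" "\<And>u. dist u p < d \<Longrightarrow> dist (f' u) (f' p) < e/2"
      using cf'[of p] e unfolding continuous_at_eps_delta by (meson half_gt_zero)
    show "\<exists>d>0. \<forall>w. dist w z < d \<longrightarrow> dist (secant_quotient f f' w) (secant_quotient f f' z) < e"
    proof (intro exI[of _ d] conjI allI impI d(1))
      fix w assume w: "dist w z < d"
      have near: "\<bar>fst w - p\<bar> < d" "\<bar>snd w - p\<bar> < d"
        using dist_fst_le[of w z] dist_snd_le[of w z] w zp by (auto simp: dist_real_def)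
      show "dist (secant_quotient f f' w) (secant_quotient f f' z) < e"
      proof (cases "fst w = snd w")
        case True
        then show ?thesis using d(2)[of "fst w"] near zp e by (simp add: secant_quotient_def dist_real_def)
      next
        case False
        let ?h = "snd w - fst w"
        have "norm (f (snd w) - f (fst w) - ?h *\<^sub>R f' p) \<le> e/2 * \<bar>?h\<bar>"
          using d(2) near by (intro secant_deviation_bound[OF f']) (auto simp: dist_norm less_imp_le)
        moreover have "(1 / ?h) *\<^sub>R (f (snd w) - f (fst w)) - f' p
            = (1 / ?h) *\<^sub>R (f (snd w) - f (fst w) - ?h *\<^sub>R f' p)"
          using False by (simp add: scaleR_diff_right)
        ultimately have "norm ((1 / ?h) *\<^sub>R (f (snd w) - f (fst w)) - f' p) \<le> e/2"
          using False by (simp add: divide_le_eq)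
        then show ?thesis using False e zp by (simp add: secant_quotient_def dist_norm)
      qed
    qed
  qed
qed

lemma convex_ordered_pairs: "convex {z::real \<times> real. a \<le> fst z \<and> fst z \<le> snd z \<and> snd z \<le> b}"
proof (rule convexI)
  fix x y :: "real \<times> real" and u v :: real
  assume x: "x \<in> {z. a \<le> fst z \<and> fst z \<le> snd z \<and> snd z \<le> b}"
    and y: "y \<in> {z. a \<le> fst z \<and> fst z \<le> snd z \<and> snd z \<le> b}"
    and uv: "0 \<le> u" "0 \<le> v" "u + v = 1"
  have mono: "u * p + v * q \<le> u * p' + v * q'" if "p \<le> p'" "q \<le> q'" for p q p' q' :: real
    using uv that by (intro add_mono mult_left_mono) auto
  have "a = u * a + v * a" "b = u * b + v * b" using uv by (simp_all flip: distrib_right)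
  then show "u *\<^sub>R x + v *\<^sub>R y \<in> {z. a \<le> fst z \<and> fst z \<le> snd z \<and> snd z \<le> b}"
    using x y mono by simp (metis (no_types, lifting))
qed

section \<open>Ovals\<close>

lemma curvature_eq_det2: "curvature \<gamma> s = det2 (vderiv \<gamma> s) (vderiv (vderiv \<gamma>) s)"
  by (simp add: curvature_def det2_def Let_def)

locale oval =
  fixes \<gamma> :: "real \<Rightarrow> real^2" and L :: real
  assumes arclength_oval: "arclength_oval \<gamma> L"
begin

abbreviation T where "T \<equiv> vderiv \<gamma>"
abbreviation k where "k \<equiv> curvature \<gamma>"

lemma period_pos: "L > 0"
  and periodic: "\<gamma> (s + L) = \<gamma> s"
  and inj_on_period: "inj_on \<gamma> {0..<L}"
  and norm_tangent: "norm (T s) = 1"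
  and curvature_pos: "k s > 0"
  and differentiable_iterate: "(vderiv ^^ n) \<gamma> differentiable (at t)"
  using arclength_oval by (simp_all add: arclength_oval_def tangent_def smooth_curve_def)

lemma tangent_nonzero [simp]: "T s \<noteq> 0"
  using norm_tangent[of s] by auto

lemma has_vector_derivative_curve: "(\<gamma> has_vector_derivative T s) (at s)"
  using differentiable_iterate[of 0] vector_derivative_works unfolding vderiv_def by auto

lemma has_vector_derivative_tangent_vderiv: "(T has_vector_derivative vderiv T s) (at s)"
  using differentiable_iterate[of 1] vector_derivative_works unfolding vderiv_def[of T] by auto

lemma isCont_curve: "isCont \<gamma> s"
  using has_vector_derivative_curve differentiable_imp_continuous_within differentiableI_vector by blast

lemma isCont_tangent: "isCont T s"
  using has_vector_derivative_tangent_vderiv differentiable_imp_continuous_within differentiableI_vector by blast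

lemma isCont_tangent_derivative: "isCont (vderiv T) s"
proof -
  have "vderiv T differentiable (at s)" using differentiable_iterate[of 2] by (simp add: numeral_2_eq_2)
  then show ?thesis by (rule differentiable_imp_continuous_within)
qed

lemma frenet: "vderiv T s = k s *\<^sub>R rot90 (T s)"
proof -
  have "((\<lambda>s. T s \<bullet> T s) has_real_derivative vderiv T s \<bullet> T s + T s \<bullet> vderiv T s) (at s)"
    by (intro derivative_intros has_vector_derivative_tangent_vderiv)
  moreover have "(\<lambda>s. T s \<bullet> T s) = (\<lambda>s. 1)"
    using norm_tangent by (simp add: fun_eq_iff flip: power2_norm_eq_inner)
  ultimately have "T s \<bullet> vderiv T s = 0"
    using DERIV_unique DERIV_const by (metis inner_commute mult_2 mult_eq_0_iff zero_neq_numeral)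
  then show ?thesis
    using orthogonal_unit_vec2[OF norm_tangent] by (metis curvature_eq_det2)
qed

lemma has_vector_derivative_tangent: "(T has_vector_derivative k s *\<^sub>R rot90 (T s)) (at s)"
  using has_vector_derivative_tangent_vderiv frenet by simp

lemma has_real_derivative_tangent_1: "((\<lambda>s. T s $ 1) has_real_derivative - k s * T s $ 2) (at s)"
  using has_vector_derivative_vec_nth[OF has_vector_derivative_tangent, where i=1] by simp

lemma has_real_derivative_tangent_2: "((\<lambda>s. T s $ 2) has_real_derivative k s * T s $ 1) (at s)"
  using has_vector_derivative_vec_nth[OF has_vector_derivative_tangent, where i=2] by simp

lemma has_real_derivative_curve_2: "((\<lambda>s. \<gamma> s $ 2) has_real_derivative T s $ 2) (at s)"
  using has_vector_derivative_vec_nth[OF has_vector_derivative_curve] .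

lemma tangent_components_sq: "(T s $ 1)^2 + (T s $ 2)^2 = 1"
  using norm_tangent[of s] by (simp add: norm_vec2)

lemma tangent_periodic: "T (s + L) = T s"
  unfolding vderiv_def
  by (rule periodic_vector_derivative) (use periodic differentiableI_vector[OF has_vector_derivative_curve] in auto)

lemma curvature_periodic: "k (s + L) = k s"
proof -
  have "vderiv T (s + L) = vderiv T s"
    unfolding vderiv_def[of T]
    by (rule periodic_vector_derivative)
       (use tangent_periodic differentiableI_vector[OF has_vector_derivative_tangent_vderiv] in auto)
  then show ?thesis by (simp add: curvature_eq_det2 tangent_periodic)
qed

lemma continuous_on_curvature: "continuous_on S k"
  unfolding curvature_eq_det2[abs_def] det2_def
  using isCont_tangent isCont_tangent_derivative
  by (intro continuous_at_imp_continuous_on ballI continuous_intros) auto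

lemma curve_eq_imp_period_multiple:
  assumes "\<gamma> u = \<gamma> v" shows "\<exists>n::int. u = v + of_int n * L"
proof -
  have reduce: "w - of_int \<lfloor>w / L\<rfloor> * L \<in> {0..<L}" for w
    using floor_divide_lower[OF period_pos, of w] floor_divide_upper[OF period_pos, of w]
    by (auto simp: algebra_simps)
  have same: "\<gamma> (w - of_int \<lfloor>w / L\<rfloor> * L) = \<gamma> w" for w
    using periodic_add_of_int_mult[of \<gamma> L w "- \<lfloor>w / L\<rfloor>", OF periodic] by simp
  have "u - of_int \<lfloor>u / L\<rfloor> * L = v - of_int \<lfloor>v / L\<rfloor> * L"
    using inj_onD[OF inj_on_period _ reduce reduce] same assms by metis
  then have "u = v + of_int (\<lfloor>u / L\<rfloor> - \<lfloor>v / L\<rfloor>) * L" by (simp add: algebra_simps)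
  then show ?thesis by blast
qed

lemma curve_point_in_period: "\<exists>t'\<in>{s..<s + L}. \<gamma> t' = \<gamma> t"
proof -
  define n where "n = \<lfloor>(t - s) / L\<rfloor>"
  have "t - of_int n * L \<in> {s..<s + L}"
    using floor_divide_lower[OF period_pos, of "t - s"] floor_divide_upper[OF period_pos, of "t - s"]
    unfolding n_def by (auto simp: algebra_simps)
  moreover have "\<gamma> (t - of_int n * L) = \<gamma> t"
    using periodic_add_of_int_mult[of \<gamma> L t "-n", OF periodic] by simp
  ultimately show ?thesis by blast
qed

lemma curve_inj_within_period:
  assumes "s0 \<le> s" "s < t" "t \<le> s0 + L" "(s, t) \<noteq> (s0, s0 + L)"
  shows "\<gamma> s \<noteq> \<gamma> t"
proof
  assume "\<gamma> s = \<gamma> t"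
  then obtain n :: int where n: "t = s + of_int n * L" using curve_eq_imp_period_multiple by metis
  have "0 < of_int n * L" using n assms(2) by linarith
  moreover have "of_int n * L \<le> L" using n assms(1,3) by linarith
  ultimately have "0 < n" "n \<le> 1" using period_pos by (simp_all add: zero_less_mult_iff mult_le_cancel_right2)
  then have "n = 1" by simp
  then show False using n assms by simp
qed

lemma lowest_point: obtains s0 where "\<And>t. \<gamma> s0 $ 2 \<le> \<gamma> t $ 2"
proof -
  have "continuous_on {0..L} (\<lambda>t. \<gamma> t $ 2)"
    using isCont_curve by (intro continuous_at_imp_continuous_on ballI continuous_intros) auto
  then obtain s0 where "\<And>y. y \<in> {0..L} \<Longrightarrow> \<gamma> s0 $ 2 \<le> \<gamma> y $ 2"
    using continuous_attains_inf[of "{0..L}" "\<lambda>t. \<gamma> t $ 2"] period_pos by fastforce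
  then show ?thesis
    using that curve_point_in_period[of 0] by (metis atLeastLessThan_iff add_0 atLeastAtMost_iff less_imp_le)
qed

subsection \<open>The tangent angle, Hopf's Umlaufsatz and convexity\<close>

lemma tangent_angle:
  assumes "c < d"
  obtains \<alpha> where "\<And>t. t \<in> {c<..<d} \<Longrightarrow> (\<alpha> has_real_derivative k t) (at t)"
    "\<And>t. t \<in> {c<..<d} \<Longrightarrow> T t $ 1 = cos (\<alpha> t) \<and> T t $ 2 = sin (\<alpha> t)"
proof -
  define \<beta> where "\<beta> t = integral {c..t} k" for t
  have d\<beta>: "(\<beta> has_real_derivative k t) (at t)" if "t \<in> {c<..<d}" for t
  proof -
    have "(\<beta> has_real_derivative k t) (at t within {c..d})"
      unfolding \<beta>_def using that continuous_on_curvature by (intro integral_has_real_derivative) auto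
    then show ?thesis using that at_within_Icc_at[of c t d] by auto
  qed
  \<comment> \<open>the components of T in the frame rotated by \<beta> are constant\<close>
  define p where "p t = T t $ 1 * cos (\<beta> t) + T t $ 2 * sin (\<beta> t)" for t
  define q where "q t = T t $ 2 * cos (\<beta> t) - T t $ 1 * sin (\<beta> t)" for t
  define m where "m = (c + d) / 2"
  have m: "m \<in> {c<..<d}" using assms by (auto simp: m_def)
  have dp: "(p has_real_derivative 0) (at u)" and dq: "(q has_real_derivative 0) (at u)"
    if "u \<in> {c<..<d}" for u
    using d\<beta>[OF that] unfolding p_def[abs_def] q_def[abs_def]
    by (auto intro!: derivative_eq_intros has_real_derivative_tangent_1 has_real_derivative_tangent_2
        simp: algebra_simps)
  have pc: "p t = p m" and qc: "q t = q m" if "t \<in> {c<..<d}" for t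
    using DERIV_isconst3[OF assms that m] dp dq by blast+
  have "(a * c + b * s)^2 + (b * c - a * s)^2 = (a^2 + b^2) * (s^2 + c^2)" for a b c s :: real
    by (simp add: power2_eq_square algebra_simps)
  then have "(p m)^2 + (q m)^2 = 1"
    unfolding p_def q_def using tangent_components_sq[of m] by simp
  then obtain \<theta> where \<theta>: "p m = cos \<theta>" "q m = sin \<theta>"
    using sincos_total_2pi by metis
  show ?thesis
  proof
    fix t assume t: "t \<in> {c<..<d}"
    show "((\<lambda>t. \<theta> + \<beta> t) has_real_derivative k t) (at t)"
      using d\<beta>[OF t] by (auto intro!: derivative_eq_intros)
    have "(a * c + b * s) * c - (b * c - a * s) * s = a * (s^2 + c^2)"
      "(a * c + b * s) * s + (b * c - a * s) * c = b * (s^2 + c^2)" for a b c s :: real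
      by (simp_all add: power2_eq_square algebra_simps)
    then have "T t $ 1 = p t * cos (\<beta> t) - q t * sin (\<beta> t)" "T t $ 2 = p t * sin (\<beta> t) + q t * cos (\<beta> t)"
      unfolding p_def q_def by simp_all
    then show "T t $ 1 = cos (\<theta> + \<beta> t) \<and> T t $ 2 = sin (\<theta> + \<beta> t)"
      using pc[OF t] qc[OF t] \<theta> by (simp add: cos_add sin_add algebra_simps)
  qed
qed

definition period_triangle :: "real \<Rightarrow> (real \<times> real) set" where
  "period_triangle s0 = {z. s0 \<le> fst z \<and> fst z \<le> snd z \<and> snd z \<le> s0 + L}"

text \<open>At the corner \<open>(s0, s0 + L)\<close> the chord degenerates; the value there is the limit of
  the chord direction from inside the triangle.\<close>
definition secant_direction :: "real \<Rightarrow> real \<times> real \<Rightarrow> complex" where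
  "secant_direction s0 z =
     (if z = (s0, s0 + L) then - complex_of_vec2 (T s0)
      else sgn (complex_of_vec2 (secant_quotient \<gamma> T z)))"

lemma secant_quotient_nonzero:
  assumes "z \<in> period_triangle s0" "z \<noteq> (s0, s0 + L)"
  shows "secant_quotient \<gamma> T z \<noteq> 0"
proof (cases "fst z = snd z")
  case True then show ?thesis by (simp add: secant_quotient_def)
next
  case False
  then have "\<gamma> (fst z) \<noteq> \<gamma> (snd z)" using assms
    by (intro curve_inj_within_period[of s0]) (auto simp: period_triangle_def prod_eq_iff)
  then show ?thesis using False by (simp add: secant_quotient_def)
qed

lemma norm_secant_direction:
  assumes "z \<in> period_triangle s0" shows "norm (secant_direction s0 z) = 1"
  using secant_quotient_nonzero[OF assms] norm_tangent
  by (simp add: secant_direction_def norm_sgn)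

lemma secant_direction_diagonal: "secant_direction s0 (s, s) = complex_of_vec2 (T s)"
  using period_pos norm_tangent by (auto simp: secant_direction_def secant_quotient_def sgn_div_norm)

lemma secant_direction_near_corner:
  assumes w: "w \<in> period_triangle s0" "dist w (s0, s0 + L) < L/2"
  shows "secant_direction s0 w = - sgn (complex_of_vec2 (secant_quotient \<gamma> T (snd w, fst w + L)))"
proof (cases "w = (s0, s0 + L)")
  case True
  then show ?thesis
    using norm_tangent by (simp add: secant_direction_def secant_quotient_def tangent_periodic sgn_div_norm)
next
  case False
  define s t where "s = fst w" and "t = snd w"
  have "dist s s0 < L/2" "dist t (s0 + L) < L/2"
    using w(2) dist_fst_le[of w "(s0, s0 + L)"] dist_snd_le[of w "(s0, s0 + L)"] by (auto simp: s_def t_def)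
  then have st: "s < t" using w(1) by (auto simp: dist_real_def period_triangle_def s_def t_def)
  have ts: "t < s + L" using w(1) False by (auto simp: period_triangle_def s_def t_def prod_eq_iff)
  have "secant_direction s0 w = sgn (complex_of_vec2 ((1 / (t - s)) *\<^sub>R (\<gamma> t - \<gamma> s)))"
    using False st by (simp add: secant_direction_def secant_quotient_def s_def t_def)
  also have "\<dots> = - sgn (complex_of_vec2 (\<gamma> s - \<gamma> t))"
    using st by (simp add: sgn_complex_of_vec2_pos_scaleR complex_of_vec2_diff flip: sgn_minus)
  also have "\<dots> = - sgn (complex_of_vec2 ((1 / (s + L - t)) *\<^sub>R (\<gamma> (s + L) - \<gamma> t)))"
    using ts by (simp add: sgn_complex_of_vec2_pos_scaleR periodic)
  also have "\<dots> = - sgn (complex_of_vec2 (secant_quotient \<gamma> T (t, s + L)))"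
    using ts by (simp add: secant_quotient_def)
  finally show ?thesis by (simp add: s_def t_def)
qed

lemma continuous_on_secant_direction: "continuous_on (period_triangle s0) (secant_direction s0)"
  unfolding continuous_on_eq_continuous_within
proof
  have cq: "continuous (at z) (secant_quotient \<gamma> T)" for z
    by (rule continuous_secant_quotient[OF has_vector_derivative_curve isCont_tangent])
  fix z assume z: "z \<in> period_triangle s0"
  show "continuous (at z within period_triangle s0) (secant_direction s0)"
  proof (cases "z = (s0, s0 + L)")
    case False
    have "continuous (at z) (\<lambda>w. sgn (complex_of_vec2 (secant_quotient \<gamma> T w)))"
      using secant_quotient_nonzero[OF z False]
      by (intro continuous_sgn continuous_complex_of_vec2 cq) (simp add: Lim_ident_at)
    then show ?thesis
    proof (rule continuous_transform_within[OF continuous_at_imp_continuous_within, of _ _ "dist z (s0, s0 + L)"])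
      fix w assume "w \<in> period_triangle s0" "dist w z < dist z (s0, s0 + L)"
      then show "sgn (complex_of_vec2 (secant_quotient \<gamma> T w)) = secant_direction s0 w"
        by (auto simp: secant_direction_def dist_commute)
    qed (use z False in auto)
  next
    case True
    have "continuous (at z) (\<lambda>w. secant_quotient \<gamma> T (snd w, fst w + L))"
      by (intro continuous_at_compose[OF _ cq, unfolded comp_def] continuous_intros)
    moreover have "secant_quotient \<gamma> T (snd z, fst z + L) \<noteq> 0"
      using True by (simp add: secant_quotient_def)
    ultimately have "continuous (at z) (\<lambda>w. - sgn (complex_of_vec2 (secant_quotient \<gamma> T (snd w, fst w + L))))"
      by (intro continuous_intros continuous_sgn continuous_complex_of_vec2) (simp_all add: Lim_ident_at)
    then show ?thesis
    proof (rule continuous_transform_within[OF continuous_at_imp_continuous_within, of _ _ "L/2"])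
      fix w assume "w \<in> period_triangle s0" "dist w z < L/2"
      then show "- sgn (complex_of_vec2 (secant_quotient \<gamma> T (snd w, fst w + L))) = secant_direction s0 w"
        using secant_direction_near_corner True by simp
    qed (use z period_pos in auto)
  qed
qed

lemma horizontal_tangent_at_lowest_point:
  assumes "\<And>t. \<gamma> s0 $ 2 \<le> \<gamma> t $ 2" shows "T s0 $ 2 = 0"
  using DERIV_local_min[OF has_real_derivative_curve_2 zero_less_one] assms by blast

lemma Im_secant_direction_first_edge:
  assumes low: "\<And>t. \<gamma> s0 $ 2 \<le> \<gamma> t $ 2" and t: "t \<in> {s0..s0 + L}"
  shows "0 \<le> Im (secant_direction s0 (s0, t))"
proof -
  have "0 \<le> Im (complex_of_vec2 (secant_quotient \<gamma> T (s0, t)))"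
    using low[of t] horizontal_tangent_at_lowest_point[OF low] t
    by (cases "t = s0") (auto simp: secant_quotient_def)
  then show ?thesis
    using horizontal_tangent_at_lowest_point[OF low] by (simp add: secant_direction_def Im_sgn)
qed

lemma Im_secant_direction_second_edge:
  assumes low: "\<And>t. \<gamma> s0 $ 2 \<le> \<gamma> t $ 2" and t: "t \<in> {s0..s0 + L}"
  shows "Im (secant_direction s0 (t, s0 + L)) \<le> 0"
proof -
  have "Im (complex_of_vec2 (secant_quotient \<gamma> T (t, s0 + L))) \<le> 0"
    using low[of t] horizontal_tangent_at_lowest_point[OF low] t
    by (cases "t = s0 + L") (auto simp: secant_quotient_def periodic tangent_periodic divide_nonpos_pos)
  then show ?thesis
    using horizontal_tangent_at_lowest_point[OF low] by (simp add: secant_direction_def Im_sgn divide_nonpos_nonneg)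
qed

lemma log_secant_direction_increment:
  fixes a b :: real
  assumes cg: "continuous_on (period_triangle s0) g"
    and fg: "\<And>z. z \<in> period_triangle s0 \<Longrightarrow> secant_direction s0 z = exp (g z)"
    and ab: "a \<le> b" and cp: "continuous_on {a..b} p" and p: "p ` {a..b} \<subseteq> period_triangle s0"
    and c: "norm c = 1" and up: "\<And>t. t \<in> {a..b} \<Longrightarrow> Im (c * secant_direction s0 (p t)) \<ge> 0"
  shows "g (p b) - g (p a) = \<i> * of_real (Arg2pi (c * secant_direction s0 (p b)) - Arg2pi (c * secant_direction s0 (p a)))"
proof -
  have c0: "c \<noteq> 0" using c by auto
  have "(\<lambda>t. g (p t) + Ln c) b - (\<lambda>t. g (p t) + Ln c) a
      = \<i> * of_real (Arg2pi (c * secant_direction s0 (p b)) - Arg2pi (c * secant_direction s0 (p a)))"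
  proof (rule log_increment_upper_half[OF ab])
    show "continuous_on {a..b} (\<lambda>t. g (p t) + Ln c)"
      by (intro continuous_intros continuous_on_compose2[OF cg cp p])
    show "continuous_on {a..b} (\<lambda>t. c * secant_direction s0 (p t))"
      by (intro continuous_intros continuous_on_compose2[OF continuous_on_secant_direction cp p])
    fix t assume t: "t \<in> {a..b}"
    then have pt: "p t \<in> period_triangle s0" using p by blast
    show "c * secant_direction s0 (p t) = exp (g (p t) + Ln c)"
      using fg[OF pt] c0 by (simp add: exp_add)
    show "norm (c * secant_direction s0 (p t)) = 1"
      using norm_secant_direction[OF pt] c by (simp add: norm_mult)
  qed (use up in auto)
  then show ?thesis by simp
qed

lemma log_secant_direction_diagonal:
  assumes cg: "continuous_on (period_triangle s0) g"
    and fg: "\<And>z. z \<in> period_triangle s0 \<Longrightarrow> secant_direction s0 z = exp (g z)"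
    and c\<beta>: "continuous_on {s0..s0 + L} \<beta>"
    and e\<beta>: "\<And>t. t \<in> {s0..s0 + L} \<Longrightarrow> T t $ 1 = cos (\<beta> t) \<and> T t $ 2 = sin (\<beta> t)"
  shows "g (s0 + L, s0 + L) - g (s0, s0) = \<i> * of_real (\<beta> (s0 + L) - \<beta> s0)"
proof -
  have "g (s0 + L, s0 + L) - \<i> * of_real (\<beta> (s0 + L)) = g (s0, s0) - \<i> * of_real (\<beta> s0)"
  proof (rule exp_eq_imp_diff_constant[of "{s0..s0 + L}" "\<lambda>t. g (t, t)"])
    show "continuous_on {s0..s0 + L} (\<lambda>t. g (t, t))"
      by (rule continuous_on_compose2[OF cg, of _ "\<lambda>t. (t, t)"]) (auto intro!: continuous_intros simp: period_triangle_def)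
    show "continuous_on {s0..s0 + L} (\<lambda>t. \<i> * of_real (\<beta> t))" using c\<beta> by (intro continuous_intros)
    fix t assume t: "t \<in> {s0..s0 + L}"
    have "exp (g (t, t)) = complex_of_vec2 (T t)"
      using fg[of "(t, t)"] secant_direction_diagonal[of s0 t] t by (simp add: period_triangle_def)
    also have "\<dots> = exp (\<i> * of_real (\<beta> t))"
      using e\<beta>[OF t] by (simp add: complex_of_vec2_def complex_eq_iff Re_exp Im_exp)
    finally show "exp (g (t, t)) = exp (\<i> * of_real (\<beta> t))" .
  qed (use period_pos in auto)
  then show ?thesis by (simp add: algebra_simps)
qed

text \<open>Hopf's Umlaufsatz, by following a continuous logarithm of the chord direction around the
  boundary of the parameter triangle: both edges contribute a half turn, the diagonal carries
  the tangent angle.\<close>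
lemma tangent_angle_turn_pm_2pi:
  assumes low: "\<And>t. \<gamma> s0 $ 2 \<le> \<gamma> t $ 2"
    and c\<beta>: "continuous_on {s0..s0 + L} \<beta>"
    and e\<beta>: "\<And>t. t \<in> {s0..s0 + L} \<Longrightarrow> T t $ 1 = cos (\<beta> t) \<and> T t $ 2 = sin (\<beta> t)"
  shows "\<beta> (s0 + L) - \<beta> s0 = 2*pi \<or> \<beta> (s0 + L) - \<beta> s0 = -2*pi"
proof -
  let ?f = "secant_direction s0" and ?Tri = "period_triangle s0"
  have "convex ?Tri" unfolding period_triangle_def by (rule convex_ordered_pairs)
  then obtain g where cg: "continuous_on ?Tri g" and fg: "\<And>z. z \<in> ?Tri \<Longrightarrow> ?f z = exp (g z)"
    using continuous_logarithm_on_contractible[OF continuous_on_secant_direction convex_imp_contractible]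
      norm_secant_direction by (metis norm_zero zero_neq_one)
  have s0L: "s0 \<le> s0 + L" using period_pos by simp
  define C0 where "C0 = complex_of_vec2 (T s0)"
  have "(T s0 $ 1)^2 = 1"
    using tangent_components_sq[of s0] horizontal_tangent_at_lowest_point[OF low] by simp
  then have C0: "C0 = 1 \<or> C0 = -1"
    using horizontal_tangent_at_lowest_point[OF low]
    by (auto simp: C0_def complex_of_vec2_def complex_eq_iff power2_eq_1_iff)
  have corner: "?f (s0, s0 + L) = - C0" by (simp add: secant_direction_def C0_def)
  have diag: "?f (t, t) = complex_of_vec2 (T t)" for t by (rule secant_direction_diagonal)
  define \<delta> where "\<delta> = Arg2pi (- C0) - Arg2pi C0"
  have edge1: "g (s0, s0 + L) - g (s0, s0) = \<i> * of_real \<delta>"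
    using log_secant_direction_increment[OF cg fg s0L, of "\<lambda>t. (s0, t)" 1]
      Im_secant_direction_first_edge[OF low] corner diag[of s0]
    by (force simp: \<delta>_def C0_def period_triangle_def intro: continuous_intros)
  have edge2: "g (s0 + L, s0 + L) - g (s0, s0 + L) = \<i> * of_real \<delta>"
    using log_secant_direction_increment[OF cg fg s0L, of "\<lambda>t. (t, s0 + L)" "-1"]
      Im_secant_direction_second_edge[OF low] corner diag[of "s0 + L"]
    by (force simp: \<delta>_def C0_def period_triangle_def tangent_periodic intro: continuous_intros)
  have "\<i> * of_real (\<beta> (s0 + L) - \<beta> s0) = \<i> * of_real (2 * \<delta>)"
    using log_secant_direction_diagonal[OF cg fg c\<beta> e\<beta>] edge1 edge2 by (simp add: algebra_simps)
  then have "Im (\<i> * of_real (\<beta> (s0 + L) - \<beta> s0)) = Im (\<i> * of_real (2 * \<delta>))" by (rule arg_cong)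
  then have "\<beta> (s0 + L) - \<beta> s0 = 2 * \<delta>" by (simp only: Im_i_times Re_complex_of_real)
  moreover have "\<delta> = pi \<or> \<delta> = - pi" using C0 by (auto simp: \<delta>_def Arg2pi_real)
  ultimately show ?thesis by auto
qed

lemma tangent_angle_strict_mono:
  assumes d\<alpha>: "\<And>t. t \<in> {c<..<d} \<Longrightarrow> (\<alpha> has_real_derivative k t) (at t)"
    and "c < a" "a < b" "b < d"
  shows "\<alpha> a < \<alpha> b"
proof (rule DERIV_pos_imp_increasing[OF assms(3)])
  fix x assume "a \<le> x" "x \<le> b"
  then show "\<exists>y. (\<alpha> has_real_derivative y) (at x) \<and> y > 0"
    using assms curvature_pos by (intro exI[of _ "k x"]) auto
qed

lemma tangent_angle_turn:
  assumes d\<alpha>: "\<And>t. t \<in> {c<..<d} \<Longrightarrow> (\<alpha> has_real_derivative k t) (at t)"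
    and e\<alpha>: "\<And>t. t \<in> {c<..<d} \<Longrightarrow> T t $ 1 = cos (\<alpha> t) \<and> T t $ 2 = sin (\<alpha> t)"
    and cs: "c < s" and sd: "s + 2 * L < d"
  shows "\<alpha> (s + L) - \<alpha> s = 2 * pi"
proof -
  obtain s1 where s1: "\<And>t. \<gamma> s1 $ 2 \<le> \<gamma> t $ 2" using lowest_point by blast
  obtain s0 where s0: "s0 \<in> {s..<s + L}" "\<gamma> s0 = \<gamma> s1" using curve_point_in_period[of s s1] by blast
  have sub: "{s0..s0 + L} \<subseteq> {c<..<d}" using s0 cs sd period_pos by auto
  have "continuous_on {s0..s0 + L} \<alpha>"
  proof (rule DERIV_atLeastAtMost_imp_continuous_on)
    fix x assume "s0 \<le> x" "x \<le> s0 + L"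
    then show "\<exists>y. (\<alpha> has_real_derivative y) (at x)" using sub d\<alpha> by (meson atLeastAtMost_iff subsetD)
  qed
  then have "\<alpha> (s0 + L) - \<alpha> s0 = 2*pi \<or> \<alpha> (s0 + L) - \<alpha> s0 = -2*pi"
    using s1 s0(2) e\<alpha> sub by (intro tangent_angle_turn_pm_2pi) auto
  moreover have "\<alpha> s0 < \<alpha> (s0 + L)"
    using s0 cs sd period_pos by (intro tangent_angle_strict_mono[OF d\<alpha>]) auto
  ultimately have turn: "\<alpha> (s0 + L) - \<alpha> s0 = 2*pi" using pi_gt_zero by linarith
  \<comment> \<open>the turn over one period does not depend on the starting point, since k is L-periodic\<close>
  have "\<alpha> (s + L) - \<alpha> s = \<alpha> (s0 + L) - \<alpha> s0"
  proof (rule DERIV_isconst3[of c "d - L" s s0 "\<lambda>t. \<alpha> (t + L) - \<alpha> t"])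
    fix t assume t: "t \<in> {c<..<d - L}"
    have "(\<alpha> has_real_derivative k (t + L)) (at (t + L))" "(\<alpha> has_real_derivative k t) (at t)"
      using t period_pos by (auto intro: d\<alpha>)
    then have "((\<lambda>t. \<alpha> (t + L) - \<alpha> t) has_real_derivative k (t + L) - k t) (at t)"
      by (intro DERIV_diff) (simp_all add: DERIV_shift)
    then show "((\<lambda>t. \<alpha> (t + L) - \<alpha> t) has_real_derivative 0) (at t)"
      by (simp add: curvature_periodic)
  qed (use cs sd period_pos s0 in auto)
  then show ?thesis using turn by simp
qed

lemma curve_left_of_tangent:
  assumes "\<gamma> u \<noteq> \<gamma> s"
  shows "det2 (T s) (\<gamma> u - \<gamma> s) > 0"
proof -
  obtain u' where u': "u' \<in> {s..<s + L}" "\<gamma> u' = \<gamma> u" using curve_point_in_period[of s u] by blast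
  have su: "s < u'" using u' assms by (cases "s = u'") auto
  obtain \<alpha> where d\<alpha>: "\<And>t. t \<in> {s - 1<..<s + 2*L + 1} \<Longrightarrow> (\<alpha> has_real_derivative k t) (at t)"
    and e\<alpha>: "\<And>t. t \<in> {s - 1<..<s + 2*L + 1} \<Longrightarrow> T t $ 1 = cos (\<alpha> t) \<and> T t $ 2 = sin (\<alpha> t)"
    using tangent_angle[of "s - 1" "s + 2*L + 1"] period_pos by auto
  have turn: "\<alpha> (s + L) - \<alpha> s = 2 * pi" by (rule tangent_angle_turn[OF d\<alpha> e\<alpha>]) auto
  have mono: "\<alpha> a < \<alpha> b" if "s \<le> a" "a < b" "b \<le> s + L" for a b
    using that period_pos by (intro tangent_angle_strict_mono[OF d\<alpha>]) auto
  define h where "h t = det2 (T s) (\<gamma> t - \<gamma> s)" for t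
  \<comment> \<open>the distance of the curve from the tangent line at s grows while the tangent turns by less
    than pi and shrinks afterwards\<close>
  have dh: "(h has_real_derivative sin (\<alpha> t - \<alpha> s)) (at t)" if "t \<in> {s..s + L}" for t
  proof -
    have "(h has_real_derivative det2 (T s) (T t)) (at t)"
      unfolding h_def by (auto intro!: derivative_eq_intros has_vector_derivative_curve)
    moreover have "det2 (T s) (T t) = sin (\<alpha> t - \<alpha> s)"
      using e\<alpha>[of s] e\<alpha>[of t] that period_pos by (simp add: det2_def sin_diff algebra_simps)
    ultimately show ?thesis by simp
  qed
  have ch: "continuous_on {a..b} h" if "s \<le> a" "b \<le> s + L" for a b
    using dh that by (intro DERIV_atLeastAtMost_imp_continuous_on) (meson atLeastAtMost_iff order_trans)
  have "h u' > 0"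
  proof (cases "\<alpha> u' - \<alpha> s \<le> pi")
    case True
    have "h s < h u'"
    proof (rule DERIV_pos_imp_increasing_open[OF su _ ch])
      fix t assume t: "s < t" "t < u'"
      have "0 < \<alpha> t - \<alpha> s" "\<alpha> t - \<alpha> s < pi" using mono[of s t] mono[of t u'] t u' True by auto
      then show "\<exists>y. (h has_real_derivative y) (at t) \<and> y > 0"
        using dh[of t] t u' by (intro exI[of _ "sin (\<alpha> t - \<alpha> s)"]) (auto intro: sin_gt_zero)
    qed (use u' in auto)
    then show ?thesis by (simp add: h_def)
  next
    case False
    have "h (s + L) < h u'"
    proof (rule DERIV_neg_imp_decreasing_open[of u' "s + L" h, OF _ _ ch])
      fix t assume t: "u' < t" "t < s + L"
      have "pi < \<alpha> t - \<alpha> s" "\<alpha> t - \<alpha> s < 2 * pi" using mono[of u' t] mono[of t "s + L"] t su False turn by auto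
      then show "\<exists>y. (h has_real_derivative y) (at t) \<and> y < 0"
        using dh[of t] t su by (intro exI[of _ "sin (\<alpha> t - \<alpha> s)"]) (auto intro: sin_lt_zero)
    qed (use u' su in auto)
    then show ?thesis by (simp add: h_def periodic)
  qed
  then show ?thesis using u' by (simp add: h_def)
qed

subsection \<open>Tangent lines through two points of the oval\<close>

definition tangent_det :: "real \<Rightarrow> real \<Rightarrow> real" where
  "tangent_det s t = det2 (T s) (T t)"

definition tangent_cos :: "real \<Rightarrow> real \<Rightarrow> real" where
  "tangent_cos s t = T s \<bullet> T t"

text \<open>Cramer's rule for \<open>\<gamma> t - \<gamma> s = a T s + b T t\<close>: the tangent lines at \<open>\<gamma> s\<close> and \<open>\<gamma> t\<close>
  meet at \<open>\<gamma> s + a T s = \<gamma> t - b T t\<close>.\<close>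
definition meet_coeff1 :: "real \<Rightarrow> real \<Rightarrow> real" where
  "meet_coeff1 s t = det2 (\<gamma> t - \<gamma> s) (T t) / tangent_det s t"

definition meet_coeff2 :: "real \<Rightarrow> real \<Rightarrow> real" where
  "meet_coeff2 s t = det2 (T s) (\<gamma> t - \<gamma> s) / tangent_det s t"

lemma chord_decomposition:
  assumes "tangent_det s t \<noteq> 0"
  shows "\<gamma> t - \<gamma> s = meet_coeff1 s t *\<^sub>R T s + meet_coeff2 s t *\<^sub>R T t"
  using det2_cramer assms unfolding meet_coeff1_def meet_coeff2_def tangent_det_def by blast

lemma meet_coeffs_unique:
  assumes "tangent_det s t \<noteq> 0" and "\<gamma> t - \<gamma> s = a *\<^sub>R T s + b *\<^sub>R T t"
  shows "a = meet_coeff1 s t" and "b = meet_coeff2 s t"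
  using det2_cramer_unique assms unfolding meet_coeff1_def meet_coeff2_def tangent_det_def by blast+

lemma tangent_meet_eq:
  assumes "tangent_det s t \<noteq> 0"
  shows "tangent_meet \<gamma> s t = \<gamma> s + meet_coeff1 s t *\<^sub>R T s"
  unfolding tangent_meet_def tangent_def
proof (rule the_equality)
  show "(\<exists>a. \<gamma> s + meet_coeff1 s t *\<^sub>R T s = \<gamma> s + a *\<^sub>R T s) \<and>
        (\<exists>b. \<gamma> s + meet_coeff1 s t *\<^sub>R T s = \<gamma> t + b *\<^sub>R T t)"
    using chord_decomposition[OF assms] by (auto simp: algebra_simps intro!: exI[of _ "- meet_coeff2 s t"])
next
  fix A assume "(\<exists>a. A = \<gamma> s + a *\<^sub>R T s) \<and> (\<exists>b. A = \<gamma> t + b *\<^sub>R T t)"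
  then obtain a b where ab: "A = \<gamma> s + a *\<^sub>R T s" "A = \<gamma> t + b *\<^sub>R T t" by blast
  then have "\<gamma> t - \<gamma> s = a *\<^sub>R T s + (- b) *\<^sub>R T t" by (simp add: algebra_simps)
  then have "a = meet_coeff1 s t" by (rule meet_coeffs_unique(1)[OF assms])
  then show "A = \<gamma> s + meet_coeff1 s t *\<^sub>R T s" using ab by simp
qed

lemma H_eq_meet_coeffs:
  assumes "tangent_det s t \<noteq> 0"
  shows "H \<gamma> s t = \<bar>meet_coeff1 s t\<bar> + \<bar>meet_coeff2 s t\<bar>"
proof -
  have "\<gamma> s + meet_coeff1 s t *\<^sub>R T s - \<gamma> t = - (meet_coeff2 s t *\<^sub>R T t)"
    using chord_decomposition[OF assms] by (simp add: algebra_simps)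
  then show ?thesis
    unfolding H_def tangent_meet_eq[OF assms] by (simp add: dist_norm norm_tangent)
qed

lemma tangent_det_sq_plus_cos_sq: "(tangent_det s t)^2 + (tangent_cos s t)^2 = 1"
  using det2_sq_plus_inner_sq[of "T s" "T t"] by (simp add: tangent_det_def tangent_cos_def norm_tangent)

lemma chord_inner_tangents:
  assumes "tangent_det s t \<noteq> 0"
  shows "T s \<bullet> (\<gamma> t - \<gamma> s) = meet_coeff1 s t + meet_coeff2 s t * tangent_cos s t"
    and "(\<gamma> t - \<gamma> s) \<bullet> T t = meet_coeff1 s t * tangent_cos s t + meet_coeff2 s t"
  unfolding chord_decomposition[OF assms] tangent_cos_def
  by (simp_all add: inner_add_left inner_add_right norm_tangent flip: power2_norm_eq_inner)

lemma has_real_derivative_tangent_det_left: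
  "((\<lambda>s. tangent_det s t) has_real_derivative - k s * tangent_cos s t) (at s)"
  unfolding tangent_det_def tangent_cos_def
  by (auto intro!: derivative_eq_intros has_vector_derivative_tangent)

lemma has_real_derivative_tangent_det_right:
  "((\<lambda>t. tangent_det s t) has_real_derivative k t * tangent_cos s t) (at t)"
  unfolding tangent_det_def tangent_cos_def
  by (auto intro!: derivative_eq_intros has_vector_derivative_tangent)

lemma has_real_derivative_tangent_cos_right:
  "((\<lambda>t. tangent_cos s t) has_real_derivative - k t * tangent_det s t) (at t)"
  unfolding tangent_det_def tangent_cos_def
  by (auto intro!: derivative_eq_intros has_vector_derivative_tangent)

context
  fixes s t :: real
  assumes D: "tangent_det s t \<noteq> 0"
begin

private abbreviation (input) "a \<equiv> meet_coeff1 s t"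
private abbreviation (input) "b \<equiv> meet_coeff2 s t"
private abbreviation (input) "C \<equiv> tangent_cos s t"
private abbreviation (input) "D \<equiv> tangent_det s t"

lemma has_real_derivative_meet_coeff1_left:
  "((\<lambda>s. meet_coeff1 s t) has_real_derivative -1 + k s * a * C / D) (at s)"
proof -
  have "((\<lambda>s. meet_coeff1 s t) has_real_derivative (- D * D - det2 (\<gamma> t - \<gamma> s) (T t) * (- k s * C)) / (D * D)) (at s)"
    unfolding meet_coeff1_def
    by (intro DERIV_divide has_real_derivative_tangent_det_left D)
       (auto intro!: derivative_eq_intros has_vector_derivative_curve simp: tangent_det_def)
  then show ?thesis by (rule DERIV_cong) (use D in \<open>simp add: meet_coeff1_def field_simps\<close>)
qed

lemma has_real_derivative_meet_coeff2_left:
  "((\<lambda>s. meet_coeff2 s t) has_real_derivative - k s * a / D) (at s)"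
proof -
  have "((\<lambda>s. meet_coeff2 s t) has_real_derivative
      (- k s * (T s \<bullet> (\<gamma> t - \<gamma> s)) * D - det2 (T s) (\<gamma> t - \<gamma> s) * (- k s * C)) / (D * D)) (at s)"
    unfolding meet_coeff2_def
    by (intro DERIV_divide has_real_derivative_tangent_det_left D)
       (auto intro!: derivative_eq_intros has_vector_derivative_curve has_vector_derivative_tangent)
  then show ?thesis
    by (rule DERIV_cong) (use D in \<open>simp add: chord_inner_tangents(1)[OF D] meet_coeff2_def field_simps\<close>)
qed

lemma has_real_derivative_meet_coeff1_right:
  "((\<lambda>t. meet_coeff1 s t) has_real_derivative k t * b / D) (at t)"
proof -
  have "((\<lambda>t. meet_coeff1 s t) has_real_derivative
      (k t * ((\<gamma> t - \<gamma> s) \<bullet> T t) * D - det2 (\<gamma> t - \<gamma> s) (T t) * (k t * C)) / (D * D)) (at t)"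
    unfolding meet_coeff1_def
    by (intro DERIV_divide has_real_derivative_tangent_det_right D)
       (auto intro!: derivative_eq_intros has_vector_derivative_curve has_vector_derivative_tangent)
  then show ?thesis
    by (rule DERIV_cong) (use D in \<open>simp add: chord_inner_tangents(2)[OF D] meet_coeff1_def field_simps\<close>)
qed

lemma has_real_derivative_meet_coeff2_right:
  "((\<lambda>t. meet_coeff2 s t) has_real_derivative 1 - k t * b * C / D) (at t)"
proof -
  have "((\<lambda>t. meet_coeff2 s t) has_real_derivative (D * D - det2 (T s) (\<gamma> t - \<gamma> s) * (k t * C)) / (D * D)) (at t)"
    unfolding meet_coeff2_def
    by (intro DERIV_divide has_real_derivative_tangent_det_right D)
       (auto intro!: derivative_eq_intros has_vector_derivative_curve simp: tangent_det_def)
  then show ?thesis by (rule DERIV_cong) (use D in \<open>simp add: meet_coeff2_def field_simps\<close>)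
qed

lemma has_real_derivative_cos_minus_1_div_det:
  "((\<lambda>t. (tangent_cos s t - 1) / tangent_det s t) has_real_derivative k t * (C - 1) / D^2) (at t)"
proof -
  have "((\<lambda>t. (tangent_cos s t - 1) / tangent_det s t) has_real_derivative
      (- k t * D * D - (C - 1) * (k t * C)) / (D * D)) (at t)"
    using DERIV_diff[OF has_real_derivative_tangent_cos_right[of s t] DERIV_const[of 1]]
    by (intro DERIV_divide has_real_derivative_tangent_det_right D) simp_all
  moreover have "- k t * D * D - (C - 1) * (k t * C) = k t * (C - 1)"
    using tangent_det_sq_plus_cos_sq[of s t] by algebra
  ultimately show ?thesis by (simp add: power2_eq_square)
qed

end

lemma meet_coeffs_pos_near:
  assumes "tangent_det x x' \<noteq> 0" "meet_coeff1 x x' > 0" "meet_coeff2 x x' > 0"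
  obtains r where "r > 0" "\<And>s t. \<bar>s - x\<bar> < r \<Longrightarrow> \<bar>t - x'\<bar> < r \<Longrightarrow>
    tangent_det s t \<noteq> 0 \<and> meet_coeff1 s t > 0 \<and> meet_coeff2 s t > 0"
proof -
  define P where "P w = min \<bar>tangent_det (fst w) (snd w)\<bar> (min (meet_coeff1 (fst w) (snd w)) (meet_coeff2 (fst w) (snd w)))" for w
  have P0: "P (x, x') > 0" using assms by (simp add: P_def)
  have cT: "isCont (\<lambda>w. T (f w)) z" and cg: "isCont (\<lambda>w. \<gamma> (f w)) z" if "isCont f z" for f :: "real \<times> real \<Rightarrow> real" and z
    using continuous_at_compose[OF that isCont_tangent] continuous_at_compose[OF that isCont_curve]
    by (simp_all add: comp_def)
  have "isCont P (x, x')" unfolding P_def meet_coeff1_def meet_coeff2_def tangent_det_def det2_def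
    using assms(1) by (intro continuous_intros cT cg) (auto simp: tangent_det_def det2_def)
  then obtain d where d: "d > 0" "\<And>w. dist w (x, x') < d \<Longrightarrow> dist (P w) (P (x, x')) < P (x, x')"
    using P0 unfolding continuous_at_eps_delta by blast
  show ?thesis
  proof (rule that[of "d/2"])
    fix s t assume st: "\<bar>s - x\<bar> < d/2" "\<bar>t - x'\<bar> < d/2"
    have "dist (s, t) (x, x') \<le> \<bar>s - x\<bar> + \<bar>t - x'\<bar>"
      unfolding dist_Pair_Pair dist_real_def using sqrt_sum_squares_le_sum_abs by simp
    then have "P (s, t) > 0" using st d(2)[of "(s, t)"] by (simp add: dist_real_def)
    then show "tangent_det s t \<noteq> 0 \<and> meet_coeff1 s t > 0 \<and> meet_coeff2 s t > 0" by (simp add: P_def)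
  qed (use d in simp)
qed

lemma H_partial_derivatives:
  assumes D: "tangent_det x x' \<noteq> 0" and pos: "meet_coeff1 x x' > 0" "meet_coeff2 x x' > 0"
  defines "a \<equiv> meet_coeff1 x x'" and "b \<equiv> meet_coeff2 x x'"
    and "C \<equiv> tangent_cos x x'" and "D \<equiv> tangent_det x x'"
  shows "((\<lambda>s. H \<gamma> s x') has_real_derivative -1 + k x * a * (C - 1) / D) (at x)"
    and "((\<lambda>t. H \<gamma> x t) has_real_derivative 1 + k x' * b * (1 - C) / D) (at x')"
    and "((\<lambda>t. deriv (\<lambda>s. H \<gamma> s t) x) has_real_derivative k x * k x' * (a + b) * (C - 1) / D^2) (at x')"
proof -
  obtain r where r: "r > 0" and box: "\<And>s t. \<bar>s - x\<bar> < r \<Longrightarrow> \<bar>t - x'\<bar> < r \<Longrightarrow>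
      tangent_det s t \<noteq> 0 \<and> meet_coeff1 s t > 0 \<and> meet_coeff2 s t > 0"
    using meet_coeffs_pos_near[OF D pos] by blast
  have H: "H \<gamma> s t = meet_coeff1 s t + meet_coeff2 s t" if "s \<in> ball x r" "t \<in> ball x' r" for s t
    using box[of s t] H_eq_meet_coeffs[of s t] that by (auto simp: dist_real_def abs_minus_commute)
  have dH_left: "((\<lambda>s. H \<gamma> s t) has_real_derivative
      -1 + k x * meet_coeff1 x t * (tangent_cos x t - 1) / tangent_det x t) (at x)"
    if t: "t \<in> ball x' r" for t
  proof (rule has_field_derivative_transform_within_open[of "\<lambda>s. meet_coeff1 s t + meet_coeff2 s t" _ _ "ball x r"])
    have Dt: "tangent_det x t \<noteq> 0" using box[of x t] t r by (auto simp: dist_real_def abs_minus_commute)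
    show "((\<lambda>s. meet_coeff1 s t + meet_coeff2 s t) has_real_derivative
        -1 + k x * meet_coeff1 x t * (tangent_cos x t - 1) / tangent_det x t) (at x)"
      by (rule DERIV_cong[OF DERIV_add[OF has_real_derivative_meet_coeff1_left[OF Dt]
            has_real_derivative_meet_coeff2_left[OF Dt]]]) (simp add: diff_divide_distrib algebra_simps)
  qed (use r H t in auto)
  show "((\<lambda>s. H \<gamma> s x') has_real_derivative -1 + k x * a * (C - 1) / D) (at x)"
    using dH_left[of x'] r unfolding a_def C_def D_def by simp
  show "((\<lambda>t. H \<gamma> x t) has_real_derivative 1 + k x' * b * (1 - C) / D) (at x')"
  proof (rule has_field_derivative_transform_within_open[of "\<lambda>t. meet_coeff1 x t + meet_coeff2 x t" _ _ "ball x' r"])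
    show "((\<lambda>t. meet_coeff1 x t + meet_coeff2 x t) has_real_derivative 1 + k x' * b * (1 - C) / D) (at x')"
      by (rule DERIV_cong[OF DERIV_add[OF has_real_derivative_meet_coeff1_right[OF D]
            has_real_derivative_meet_coeff2_right[OF D]]])
         (simp add: b_def C_def D_def diff_divide_distrib algebra_simps)
  qed (use r H in auto)
  have "((\<lambda>t. -1 + k x * (meet_coeff1 x t * ((tangent_cos x t - 1) / tangent_det x t))) has_real_derivative
      0 + k x * (k x' * b / D * ((C - 1) / D) + k x' * (C - 1) / D^2 * a)) (at x')"
    unfolding a_def b_def C_def D_def
    by (intro DERIV_add DERIV_const DERIV_cmult DERIV_mult has_real_derivative_meet_coeff1_right
        has_real_derivative_cos_minus_1_div_det D)
  then have "((\<lambda>t. -1 + k x * (meet_coeff1 x t * ((tangent_cos x t - 1) / tangent_det x t))) has_real_derivative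
      k x * k x' * (a + b) * (C - 1) / D^2) (at x')"
    by (rule DERIV_cong) (cases "D = 0"; simp add: power2_eq_square field_simps)
  then show "((\<lambda>t. deriv (\<lambda>s. H \<gamma> s t) x) has_real_derivative k x * k x' * (a + b) * (C - 1) / D^2) (at x')"
  proof (rule has_field_derivative_transform_within_open[where S = "ball x' r"])
    fix t assume "t \<in> ball x' r"
    then show "-1 + k x * (meet_coeff1 x t * ((tangent_cos x t - 1) / tangent_det x t)) = deriv (\<lambda>s. H \<gamma> s t) x"
      using DERIV_imp_deriv[OF dH_left] by simp
  qed (use r in auto)
qed

lemma tangency_configuration:
  assumes neg: "is_neg_tangency \<gamma> A x" and pos: "is_pos_tangency \<gamma> A x'"
  shows "tangent_det x x' > 0" and "meet_coeff1 x x' > 0" and "meet_coeff2 x x' > 0"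
    and "meet_coeff1 x x' = dist A (\<gamma> x)" and "meet_coeff2 x x' = dist A (\<gamma> x')"
    and "vangle (\<gamma> x - A) (\<gamma> x' - A) = arccos (- tangent_cos x x')"
proof -
  obtain a where a: "a > 0" "A - \<gamma> x = a *\<^sub>R T x"
    using neg unfolding is_neg_tangency_def tangent_def by blast
  obtain b where b: "b > 0" "\<gamma> x' - A = b *\<^sub>R T x'"
    using pos unfolding is_pos_tangency_def tangent_def by blast
  have "\<gamma> x' - \<gamma> x = (A - \<gamma> x) + (\<gamma> x' - A)" by simp
  then have chord: "\<gamma> x' - \<gamma> x = a *\<^sub>R T x + b *\<^sub>R T x'" using a b by simp
  show D: "tangent_det x x' > 0"
  proof (cases "\<gamma> x' = \<gamma> x")
    case True
    then obtain n :: int where "x' = x + of_int n * L" using curve_eq_imp_period_multiple by blast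
    then have "T x' = T x" using periodic_add_of_int_mult[of T L, OF tangent_periodic] by simp
    then show ?thesis using chord True a b by (simp flip: scaleR_add_left)
  next
    case False
    then have "0 < det2 (T x) (\<gamma> x' - \<gamma> x)" by (rule curve_left_of_tangent)
    also have "\<dots> = b * tangent_det x x'" by (simp add: chord tangent_det_def det2_add_right)
    finally show ?thesis using b by (simp add: zero_less_mult_iff)
  qed
  have ab: "a = meet_coeff1 x x'" "b = meet_coeff2 x x'"
    using meet_coeffs_unique[OF _ chord] D by auto
  show "meet_coeff1 x x' > 0" "meet_coeff2 x x' > 0" using a b ab by simp_all
  show "meet_coeff1 x x' = dist A (\<gamma> x)" "meet_coeff2 x x' = dist A (\<gamma> x')"
    using a b ab by (simp_all add: dist_norm norm_tangent norm_minus_commute[of A])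
  have "\<gamma> x - A = (- a) *\<^sub>R T x" using a by (simp add: algebra_simps)
  then show "vangle (\<gamma> x - A) (\<gamma> x' - A) = arccos (- tangent_cos x x')"
    using a b by (simp add: vangle_def tangent_cos_def norm_tangent)
qed

end

lemma half_angle_arccos:
  fixes C D :: real
  assumes D: "D > 0" and DC: "D^2 + C^2 = 1"
  shows "cot (arccos (- C) / 2) = (1 - C) / D" and "2 * (sin (arccos (- C) / 2))^2 = 1 + C"
proof -
  have "0 < D^2" using D by simp
  then have "\<bar>C\<bar> < 1" using DC abs_square_less_1[of C] by linarith
  then have C: "-1 < C" "C < 1" by auto
  define y where "y = arccos (- C) / 2"
  have "cos (2 * y) = - C" using C by (simp add: y_def)
  then show sin2: "2 * (sin (arccos (- C) / 2))^2 = 1 + C"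
    using cos_double_sin[of y] by (simp add: y_def)
  have "sin (2 * y) = sqrt (1 - C^2)" using C by (simp add: y_def sin_arccos)
  also have "\<dots> = D" using D DC by (simp add: real_sqrt_unique algebra_simps)
  finally have "2 * sin y * cos y = D" by (simp add: sin_double)
  moreover have "sin y \<noteq> 0" using sin2 C by (auto simp: y_def)
  then have "cot y = (2 * sin y * cos y) / (2 * (sin y)^2)" by (simp add: cot_def power2_eq_square)
  ultimately have "cot y = D / (1 + C)" using sin2 by (simp add: y_def)
  also have "\<dots> = (1 - C) / D"
    using C D DC by (simp add: field_simps power2_eq_square)
  finally show "cot (arccos (- C) / 2) = (1 - C) / D" by (simp add: y_def)
qed

lemma cos_minus_one_div_sin_sq:
  fixes C D :: real
  assumes "D \<noteq> 0" and "D^2 + C^2 = 1"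
  shows "(C - 1) / D^2 = - 1 / (1 + C)"
proof -
  have "1 + C \<noteq> 0"
  proof
    assume "1 + C = 0"
    then have "D^2 = 0" using assms(2) by (simp add: power2_eq_square eq_neg_iff_add_eq_0 [symmetric])
    then show False using assms(1) by simp
  qed
  moreover have "(C - 1) * (1 + C) = - (D^2)" using assms(2) by algebra
  ultimately have "(C - 1) / D^2 = - (D^2) / (D^2 * (1 + C))"
    by (metis mult.commute nonzero_mult_divide_mult_cancel_left)
  then show ?thesis using assms(1) by simp
qed

theorem lemma2p1:
  fixes \<gamma> :: "real \<Rightarrow> real^2" and L x x' :: real and A :: "real^2"
  assumes oval: "arclength_oval \<gamma> L"
    and ext: "A \<notin> oval_domain \<gamma>"
    and meet: "A = tangent_meet \<gamma> x x'"
    and neg: "is_neg_tangency \<gamma> A x"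
    and pos: "is_pos_tangency \<gamma> A x'"
  defines "\<phi> \<equiv> vangle (\<gamma> x - A) (\<gamma> x' - A)"
  shows "((\<lambda>t. H \<gamma> t x') has_real_derivative
            (- curvature \<gamma> x * dist A (\<gamma> x) * cot (\<phi> / 2) - 1)) (at x) \<and>
         ((\<lambda>t. H \<gamma> x t) has_real_derivative
            (curvature \<gamma> x' * dist A (\<gamma> x') * cot (\<phi> / 2) + 1)) (at x') \<and>
         ((\<lambda>t. deriv (\<lambda>s. H \<gamma> s t) x) has_real_derivative
            (- (curvature \<gamma> x * curvature \<gamma> x' * (dist A (\<gamma> x) + dist A (\<gamma> x')))
               / (2 * (sin (\<phi> / 2))\<^sup>2))) (at x')"
proof -
  interpret oval \<gamma> L by (rule oval.intro) (rule oval)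
  let ?C = "tangent_cos x x'" and ?D = "tangent_det x x'"
  note config = tangency_configuration[OF neg pos]
  have DC: "?D^2 + ?C^2 = 1" by (rule tangent_det_sq_plus_cos_sq)
  note half_angle = half_angle_arccos[OF config(1) DC, folded config(6) \<phi>_def]
  note dH = H_partial_derivatives[OF less_imp_neq[OF config(1), symmetric] config(2,3), unfolded config(4,5)]
  have mixed: "X * (?C - 1) / ?D^2 = - X / (2 * (sin (\<phi> / 2))\<^sup>2)" for X
  proof -
    have "X * (?C - 1) / ?D^2 = X * ((?C - 1) / ?D^2)" by simp
    also have "\<dots> = - X / (1 + ?C)" using cos_minus_one_div_sin_sq[OF _ DC] config(1) by simp
    finally show ?thesis unfolding half_angle(2) .
  qed
  have "-1 + k x * dist A (\<gamma> x) * (?C - 1) / ?D = - k x * dist A (\<gamma> x) * cot (\<phi> / 2) - 1"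
    and "1 + k x' * dist A (\<gamma> x') * (1 - ?C) / ?D = k x' * dist A (\<gamma> x') * cot (\<phi> / 2) + 1"
    unfolding half_angle(1) using config(1) by (simp_all add: field_simps)
  then show ?thesis
    using DERIV_cong[OF dH(1)] DERIV_cong[OF dH(2)] DERIV_cong[OF dH(3) mixed] by blast
qed

end
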